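(* Fix a state $(\mathbf x(n),\mathbf g(n))$ of the model in the context and two feasible withdrawal vectors $\mathbf y(n)$ and $\mathbf y'(n)$. Then $\mathbf y'(n)$ can be obtained from $\mathbf y(n)$ by performing a sequence of feasible single-server reallocations.
   Context: Model: real queues $1,\dots,L$, dummy queue $0$, $K$ identical servers. State: queue lengths $x_i(n)\in\mathbb Z_+$ ($x_0=0$), connectivities $g_{i,j}(n)\in\{0,1\}$ ($g_{0,j}=1$). A scheduling control $\mathbf q\in\{0,\dots,L\}^K$ (server $j$ serves $q_j$, $0$ = idle) is feasible if $g_{q_j,j}=1$ for all $j$ and each real queue $i$ gets at most $x_i$ servers; its withdrawal vector is $y_i=\#\{j:q_j=i\}$; a withdrawal vector is feasible if it arises from a feasible control (an implementation of it). Given a feasible withdrawal vector with implementation $\mathbf q$, a feasible single-server reallocation from queue $t$ to queue $f$ changes $q_k$ from $t$ to $f$ for a single server $k$ with $q_k=t$, such that the new control is again feasible; the new withdrawal vector is the old one plus $\mathbf I(f,t)$, where $\mathbf I(f,t)$ has $+1$ at $f$, $-1$ at $t$ and $0$ elsewhere ($\mathbf I(f,f)=0$). *)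

theory Defs
  imports Main
begin

text \<open>Queues are indexed by 0..L (0 = dummy queue), servers by 1..K.
  A state consists of queue lengths x :: nat => nat and connectivities
  g :: nat => nat => bool (g i j: queue i connected to server j).
  A scheduling control is q :: nat => nat (server j serves queue q j);
  only the values on servers 1..K matter.\<close>

definition num_alloc :: "nat \<Rightarrow> (nat \<Rightarrow> nat) \<Rightarrow> nat \<Rightarrow> nat" where
  "num_alloc K q i = card {j \<in> {1..K}. q j = i}"

definition feasible_control ::
  "nat \<Rightarrow> nat \<Rightarrow> (nat \<Rightarrow> nat) \<Rightarrow> (nat \<Rightarrow> nat \<Rightarrow> bool) \<Rightarrow> (nat \<Rightarrow> nat) \<Rightarrow> bool" where
  "feasible_control L K x g q \<longleftrightarrow>
     (\<forall>j\<in>{1..K}. q j \<le> L \<and> g (q j) j) \<and>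
     (\<forall>i\<in>{1..L}. num_alloc K q i \<le> x i)"

text \<open>Withdrawal vector of a control: y i = #{j : q j = i}, for i = 0..L
  (and automatically 0 for i > L when the control is feasible).\<close>
definition withdrawal :: "nat \<Rightarrow> (nat \<Rightarrow> nat) \<Rightarrow> (nat \<Rightarrow> nat)" where
  "withdrawal K q = (\<lambda>i. num_alloc K q i)"

definition feasible_withdrawal ::
  "nat \<Rightarrow> nat \<Rightarrow> (nat \<Rightarrow> nat) \<Rightarrow> (nat \<Rightarrow> nat \<Rightarrow> bool) \<Rightarrow> (nat \<Rightarrow> nat) \<Rightarrow> bool" where
  "feasible_withdrawal L K x g y \<longleftrightarrow>
     (\<exists>q. feasible_control L K x g q \<and> withdrawal K q = y)"

definition feasible_realloc ::
  "nat \<Rightarrow> nat \<Rightarrow> (nat \<Rightarrow> nat) \<Rightarrow> (nat \<Rightarrow> nat \<Rightarrow> bool) \<Rightarrow> (nat \<Rightarrow> nat) \<Rightarrow> (nat \<Rightarrow> nat) \<Rightarrow> bool" where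
  "feasible_realloc L K x g y y' \<longleftrightarrow>
     (\<exists>q k f t. feasible_control L K x g q \<and> withdrawal K q = y \<and>
        k \<in> {1..K} \<and> q k = t \<and> f \<le> L \<and>
        feasible_control L K x g (q(k := f)) \<and>
        y' = withdrawal K (q(k := f)))"

end

theory Submission
  imports Defs
begin

text \<open>Reallocations are reversible (move the server back), so reachability is symmetric.
  Any feasible control can be emptied one server at a time by reallocating each busy
  server to the always-connected dummy queue; every intermediate control serves a subset
  of the original assignments and hence stays feasible. Thus every feasible withdrawal
  vector reaches the all-idle vector, and by symmetry any two are connected through it.\<close>

lemma feasible_realloc_sym:
  assumes "feasible_realloc L K x g y y'"
  shows "feasible_realloc L K x g y' y"
proof -
  obtain q k f where q: "feasible_control L K x g q" "withdrawal K q = y"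
    and k: "k \<in> {1..K}" and "f \<le> L"
    and q': "feasible_control L K x g (q(k := f))" "y' = withdrawal K (q(k := f))"
    using assms unfolding feasible_realloc_def by blast
  have "q k \<le> L"
    using q(1) k unfolding feasible_control_def by blast
  moreover have "(q(k := f))(k := q k) = q"
    by simp
  ultimately show ?thesis
    unfolding feasible_realloc_def using q q' k by (metis fun_upd_same)
qed

lemma symp_feasible_realloc_rtranclp: "symp (feasible_realloc L K x g)\<^sup>*\<^sup>*"
  by (rule symp_rtranclp) (auto intro: sympI feasible_realloc_sym)

definition idle_outside :: "(nat \<Rightarrow> nat) \<Rightarrow> nat set \<Rightarrow> nat \<Rightarrow> nat" where
  "idle_outside q S = (\<lambda>j. if j \<in> S then q j else 0)"

lemma feasible_control_idle_outside:
  assumes "\<forall>j. g 0 j" and "feasible_control L K x g q"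
  shows "feasible_control L K x g (idle_outside q S)"
proof -
  have "num_alloc K (idle_outside q S) i \<le> num_alloc K q i" if "i \<in> {1..L}" for i
    unfolding num_alloc_def
    by (rule card_mono) (use that in \<open>auto simp: idle_outside_def\<close>)
  then show ?thesis
    using assms unfolding feasible_control_def idle_outside_def
    by (auto intro: order_trans) (meson atLeastAtMost_iff order_trans)
qed

lemma withdrawal_idle_outside_servers: "withdrawal K (idle_outside q {1..K}) = withdrawal K q"
  unfolding withdrawal_def num_alloc_def idle_outside_def
  by (intro ext arg_cong[where f = card]) auto

lemma feasible_realloc_idle_server:
  assumes "\<forall>j. g 0 j" and "feasible_control L K x g q" and "k \<in> {1..K}" and "k \<notin> S"
  shows "feasible_realloc L K x g
           (withdrawal K (idle_outside q (insert k S))) (withdrawal K (idle_outside q S))"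
proof -
  have "(idle_outside q (insert k S))(k := 0) = idle_outside q S"
    using assms(4) by (auto simp: idle_outside_def)
  then show ?thesis
    unfolding feasible_realloc_def
    using feasible_control_idle_outside[OF assms(1,2)] assms(3) by fastforce
qed

lemma feasible_control_reaches_idle:
  assumes "\<forall>j. g 0 j" and "feasible_control L K x g q"
  shows "(feasible_realloc L K x g)\<^sup>*\<^sup>* (withdrawal K q) (withdrawal K (\<lambda>_. 0))"
proof -
  have "(feasible_realloc L K x g)\<^sup>*\<^sup>* (withdrawal K (idle_outside q S)) (withdrawal K (\<lambda>_. 0))"
    if "finite S" "S \<subseteq> {1..K}" for S
    using that
  proof (induction S rule: finite_induct)
    case empty
    show ?case by (simp add: idle_outside_def)
  next
    case (insert k S)
    then show ?case
      using feasible_realloc_idle_server[OF assms, of k S]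
      by (auto intro: converse_rtranclp_into_rtranclp)
  qed
  then show ?thesis
    using withdrawal_idle_outside_servers by (metis finite_atLeastAtMost order_refl)
qed

theorem mainTheorem12:
  fixes L K :: nat and x :: "nat \<Rightarrow> nat" and g :: "nat \<Rightarrow> nat \<Rightarrow> bool"
    and y y' :: "nat \<Rightarrow> nat"
  assumes "x 0 = 0"
    and "\<forall>j. g 0 j"
    and "feasible_withdrawal L K x g y"
    and "feasible_withdrawal L K x g y'"
  shows "(feasible_realloc L K x g)\<^sup>*\<^sup>* y y'"
proof -
  obtain q q' where q: "feasible_control L K x g q" "withdrawal K q = y"
    and q': "feasible_control L K x g q'" "withdrawal K q' = y'"
    using assms(3,4) unfolding feasible_withdrawal_def by blast
  have "(feasible_realloc L K x g)\<^sup>*\<^sup>* y (withdrawal K (\<lambda>_. 0))"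
    using feasible_control_reaches_idle[OF assms(2) q(1)] q(2) by simp
  moreover have "(feasible_realloc L K x g)\<^sup>*\<^sup>* (withdrawal K (\<lambda>_. 0)) y'"
    using feasible_control_reaches_idle[OF assms(2) q'(1)] q'(2)
      symp_feasible_realloc_rtranclp by (metis sympD)
  ultimately show ?thesis
    by (rule rtranclp_trans)
qed

end
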